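(* Let $G=(V,E)$ be a fixed finite simple graph, $\Gamma$ a nonempty family of walks on $G$, and $1<p<\infty$. Define $F(\sigma):=\mathrm{Mod}_p(\Gamma;\sigma)$ for weights $\sigma:E\to(0,\infty)$, and let $\rho^*_\sigma$ be the unique extremal density for $\mathrm{Mod}_p(\Gamma;\sigma)$. Then for every $\sigma$ and every direction $\eta:E\to\mathbb{R}$, $$\lim_{h\to0^+}\frac{F(\sigma+h\eta)-F(\sigma)}{h}=\sum_{e\in E}\eta(e)\rho^*_\sigma(e)^p;$$ in particular $\dfrac{\partial F(\sigma)}{\partial\sigma(e)}=\rho^*_\sigma(e)^p$ for every $e\in E$.
   Context: $G=(V,E)$ is a finite simple graph (directed or undirected). A walk is a string of edges $e_1\dots e_r$, $r\ge1$, $e_i=(v_i,v_{i+1})\in E$, with $\rho$-length $\ell_\rho(\gamma)=\sum_i\rho(e_i)$ for $\rho:E\to\mathbb{R}$. $A(\Gamma)=\{\rho:E\to\mathbb{R}:\rho\ge0,\ \ell_\rho(\gamma)\ge1\ \forall\gamma\in\Gamma\}$. For weights $\sigma:E\to(0,\infty)$, $\mathcal{E}_p(\rho;\sigma)=\sum_e\sigma(e)|\rho(e)|^p$ and $\mathrm{Mod}_p(\Gamma;\sigma)=\inf_{\rho\in A(\Gamma)}\mathcal{E}_p(\rho;\sigma)$; the extremal density is the unique minimizer in $A(\Gamma)$ (for $1<p<\infty$). *)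

theory Defs
  imports "HOL-Analysis.Analysis"
begin

definition simple_graph :: "'v set \<Rightarrow> ('v \<times> 'v) set \<Rightarrow> bool" where
  "simple_graph V E \<longleftrightarrow> finite V \<and> E \<subseteq> V \<times> V \<and> (\<forall>v. (v, v) \<notin> E)"

definition is_walk :: "('v \<times> 'v) set \<Rightarrow> ('v \<times> 'v) list \<Rightarrow> bool" where
  "is_walk E \<gamma> \<longleftrightarrow> \<gamma> \<noteq> [] \<and> set \<gamma> \<subseteq> E \<and>
     (\<forall>i. i + 1 < length \<gamma> \<longrightarrow> snd (\<gamma> ! i) = fst (\<gamma> ! (i + 1)))"

definition rho_length :: "('v \<times> 'v \<Rightarrow> real) \<Rightarrow> ('v \<times> 'v) list \<Rightarrow> real" where
  "rho_length \<rho> \<gamma> = sum_list (map \<rho> \<gamma>)"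

definition admissible :: "('v \<times> 'v) set \<Rightarrow> ('v \<times> 'v) list set \<Rightarrow> ('v \<times> 'v \<Rightarrow> real) set" where
  "admissible E \<Gamma> = {\<rho>. (\<forall>e. e \<notin> E \<longrightarrow> \<rho> e = 0) \<and> (\<forall>e\<in>E. 0 \<le> \<rho> e) \<and>
                        (\<forall>\<gamma>\<in>\<Gamma>. 1 \<le> rho_length \<rho> \<gamma>)}"

definition energy :: "('v \<times> 'v) set \<Rightarrow> real \<Rightarrow> ('v \<times> 'v \<Rightarrow> real) \<Rightarrow> ('v \<times> 'v \<Rightarrow> real) \<Rightarrow> real" where
  "energy E p \<sigma> \<rho> = (\<Sum>e\<in>E. \<sigma> e * \<bar>\<rho> e\<bar> powr p)"

definition Mod :: "('v \<times> 'v) set \<Rightarrow> real \<Rightarrow> ('v \<times> 'v) list set \<Rightarrow> ('v \<times> 'v \<Rightarrow> real) \<Rightarrow> real" where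
  "Mod E p \<Gamma> \<sigma> = Inf (energy E p \<sigma> ` admissible E \<Gamma>)"

definition extremal_density ::
  "('v \<times> 'v) set \<Rightarrow> real \<Rightarrow> ('v \<times> 'v) list set \<Rightarrow> ('v \<times> 'v \<Rightarrow> real) \<Rightarrow> ('v \<times> 'v \<Rightarrow> real)" where
  "extremal_density E p \<Gamma> \<sigma> =
     (THE \<rho>. \<rho> \<in> admissible E \<Gamma> \<and> energy E p \<sigma> \<rho> = Mod E p \<Gamma> \<sigma>)"

end

theory Submission
  imports Defs
begin

text \<open>The modulus is an infimum of functions that are affine in the weights \<open>\<sigma>\<close>, so comparing
  \<open>\<sigma>\<close> and \<open>\<tau>\<close> through each other's extremal densities sandwiches
  \<open>Mod(\<tau>) - Mod(\<sigma>)\<close> between \<open>\<Sum>(\<tau> - \<sigma>) \<rho>\<^sub>\<tau>\<^sup>p\<close> and \<open>\<Sum>(\<tau> - \<sigma>) \<rho>\<^sub>\<sigma>\<^sup>p\<close>.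
  The derivative formula therefore follows once the extremal density depends continuously on the
  weights. Continuity comes from uniform convexity of \<open>x powr p\<close> on bounded intervals: the extremal
  density for nearby weights is almost a minimizer for \<open>\<sigma>\<close>, so its midpoint with \<open>\<rho>\<^sub>\<sigma>\<close>
  has small convexity defect, which forces the two densities to be close.\<close>

lemma powr_diff_mean_value:
  fixes x y p :: real
  assumes "0 \<le> x" "x < y" "0 < p"
  shows "\<exists>z. x < z \<and> z < y \<and> y powr p - x powr p = (y - x) * (p * z powr (p - 1))"
proof -
  have "continuous_on {x..y} (\<lambda>z. z powr p)"
    using assms by (intro continuous_on_powr') (auto intro!: continuous_intros)
  moreover have "(\<lambda>z. z powr p) differentiable (at z)" if "x < z" for z
    using has_real_derivative_powr[of z p] that assms real_differentiable_def by force
  ultimately obtain l z where z: "x < z" "z < y" "((\<lambda>z. z powr p) has_real_derivative l) (at z)"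
      "y powr p - x powr p = (y - x) * l"
    using MVT[OF \<open>x < y\<close>] by blast
  have "l = p * z powr (p - 1)"
    using DERIV_unique[OF z(3) has_real_derivative_powr] z assms by auto
  then show ?thesis using z by blast
qed

definition midpoint_defect :: "real \<Rightarrow> real \<Rightarrow> real \<Rightarrow> real" where
  "midpoint_defect p a b = a powr p + b powr p - 2 * ((a + b) / 2) powr p"

lemma midpoint_defect_commute: "midpoint_defect p a b = midpoint_defect p b a"
  by (simp add: midpoint_defect_def add.commute)

lemma midpoint_defect_pos:
  fixes a b p :: real
  assumes p: "1 < p" and "0 \<le> a" "0 \<le> b" "a \<noteq> b"
  shows "0 < midpoint_defect p a b"
proof -
  have less: "0 < midpoint_defect p a b" if ab: "0 \<le> a" "a < b" for a b
  proof -
    define m where "m = (a + b) / 2"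
    have "a < m" "m < b" "m - a = b - m" using ab by (auto simp: m_def field_simps)
    moreover obtain z1 where z1: "a < z1" "z1 < m"
        "m powr p - a powr p = (m - a) * (p * z1 powr (p - 1))"
      using powr_diff_mean_value[of a m p] p ab \<open>a < m\<close> by auto
    moreover obtain z2 where z2: "m < z2" "b powr p - m powr p = (b - m) * (p * z2 powr (p - 1))"
      using powr_diff_mean_value[of m b p] p ab \<open>a < m\<close> \<open>m < b\<close> by auto
    ultimately have z: "a < z1" "z1 < m" "m < z2"
        "m powr p - a powr p = (m - a) * (p * z1 powr (p - 1))"
        "b powr p - m powr p = (m - a) * (p * z2 powr (p - 1))"
      by auto
    have "p * z1 powr (p - 1) < p * z2 powr (p - 1)"
      using powr_less_mono2[of "p - 1" z1 z2] p z ab by auto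
    then have "m powr p - a powr p < b powr p - m powr p"
      using z \<open>a < m\<close> by (simp add: mult_strict_left_mono)
    then show ?thesis by (simp add: midpoint_defect_def m_def)
  qed
  show ?thesis
    using assms less[of a b] less[of b a] by (cases "a < b") (auto simp: midpoint_defect_commute)
qed

lemma midpoint_defect_nonneg:
  fixes a b p :: real
  assumes "1 < p" "0 \<le> a" "0 \<le> b"
  shows "0 \<le> midpoint_defect p a b"
  using midpoint_defect_pos[OF assms] by (cases "a = b") (auto simp: midpoint_defect_def)

lemma midpoint_defect_uniformly_pos:
  fixes p M \<epsilon> :: real
  assumes p: "1 < p" and "0 < \<epsilon>"
  obtains \<kappa> where "0 < \<kappa>"
    "\<And>a b. \<lbrakk>0 \<le> a; a \<le> M; 0 \<le> b; b \<le> M; \<epsilon> \<le> \<bar>a - b\<bar>\<rbrakk> \<Longrightarrow> \<kappa> \<le> midpoint_defect p a b"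
proof -
  define K where "K = ({0..M} \<times> {0..M}) \<inter> {z::real \<times> real. \<epsilon> \<le> \<bar>fst z - snd z\<bar>}"
  have in_K: "(a, b) \<in> K \<longleftrightarrow> 0 \<le> a \<and> a \<le> M \<and> 0 \<le> b \<and> b \<le> M \<and> \<epsilon> \<le> \<bar>a - b\<bar>" for a b
    by (auto simp: K_def)
  show thesis
  proof (cases "K = {}")
    case True
    then show thesis using in_K by (intro that[of 1]) auto
  next
    case False
    have "closed {z::real \<times> real. \<epsilon> \<le> \<bar>fst z - snd z\<bar>}"
      by (intro closed_Collect_le continuous_intros)
    then have "compact K" unfolding K_def by (intro compact_Int_closed compact_Times) auto
    moreover have "continuous_on K (\<lambda>z. midpoint_defect p (fst z) (snd z))"
      unfolding midpoint_defect_def using p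
      by (intro continuous_intros continuous_on_powr') (auto simp: K_def)
    ultimately obtain z0 where z0: "z0 \<in> K"
        "\<And>z. z \<in> K \<Longrightarrow> midpoint_defect p (fst z0) (snd z0) \<le> midpoint_defect p (fst z) (snd z)"
      using continuous_attains_inf[OF _ False] by blast
    have "0 < midpoint_defect p (fst z0) (snd z0)"
      using z0(1) \<open>0 < \<epsilon>\<close> by (intro midpoint_defect_pos[OF p]) (auto simp: K_def)
    then show thesis using z0(2) in_K by (intro that) auto
  qed
qed

lemma le_max_one_if_powr_le:
  fixes x p K :: real
  assumes "0 \<le> x" "x powr p \<le> K" "1 \<le> p"
  shows "x \<le> max 1 K"
proof (cases "x \<le> 1")
  case False
  then have "x powr 1 \<le> x powr p" using assms by (intro powr_mono) auto
  then show ?thesis using assms False by auto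
qed auto

lemma energy_admissible:
  "\<rho> \<in> admissible E \<Gamma> \<Longrightarrow> energy E p \<sigma> \<rho> = (\<Sum>e\<in>E. \<sigma> e * \<rho> e powr p)"
  unfolding energy_def admissible_def by (intro sum.cong) auto

lemma admissible_zero: "\<rho> \<in> admissible E \<Gamma> \<Longrightarrow> e \<notin> E \<Longrightarrow> \<rho> e = 0"
  unfolding admissible_def by blast

lemma admissible_nonneg:
  assumes "\<rho> \<in> admissible E \<Gamma>"
  shows "0 \<le> \<rho> e"
proof (cases "e \<in> E")
  case True
  then show ?thesis using assms by (simp add: admissible_def)
next
  case False
  then show ?thesis using admissible_zero[OF assms] by simp
qed

lemma rho_length_midpoint:
  "rho_length (\<lambda>e. (\<rho> e + r e) / 2) \<gamma> = (rho_length \<rho> \<gamma> + rho_length r \<gamma>) / 2"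
  by (induct \<gamma>) (auto simp: rho_length_def field_simps)

lemma admissible_midpoint:
  assumes "\<rho> \<in> admissible E \<Gamma>" "r \<in> admissible E \<Gamma>"
  shows "(\<lambda>e. (\<rho> e + r e) / 2) \<in> admissible E \<Gamma>"
proof -
  have "1 \<le> rho_length (\<lambda>e. (\<rho> e + r e) / 2) \<gamma>" if "\<gamma> \<in> \<Gamma>" for \<gamma>
    using assms that unfolding admissible_def rho_length_midpoint by force
  then show ?thesis using assms unfolding admissible_def by auto
qed

lemma energy_midpoint_defect:
  assumes "\<rho> \<in> admissible E \<Gamma>" "r \<in> admissible E \<Gamma>"
  shows "energy E p \<sigma> \<rho> + energy E p \<sigma> r - 2 * energy E p \<sigma> (\<lambda>e. (\<rho> e + r e) / 2)
    = (\<Sum>e\<in>E. \<sigma> e * midpoint_defect p (\<rho> e) (r e))"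
  using assms admissible_midpoint[OF assms]
  by (simp add: energy_admissible midpoint_defect_def sum.distrib sum_subtractf
      sum_distrib_left algebra_simps)

lemma rho_length_indicator:
  "set \<gamma> \<subseteq> E \<Longrightarrow> rho_length (\<lambda>e. if e \<in> E then 1 else 0) \<gamma> = real (length \<gamma>)"
  by (induct \<gamma>) (auto simp: rho_length_def)

lemma indicator_admissible:
  assumes "\<forall>\<gamma>\<in>\<Gamma>. is_walk E \<gamma>"
  shows "(\<lambda>e. if e \<in> E then 1 else 0) \<in> admissible E \<Gamma>"
proof -
  have "1 \<le> rho_length (\<lambda>e. if e \<in> E then 1 else 0) \<gamma>" if "\<gamma> \<in> \<Gamma>" for \<gamma>
  proof -
    have "\<gamma> \<noteq> []" "set \<gamma> \<subseteq> E" using assms that by (auto simp: is_walk_def)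
    then show ?thesis by (simp add: rho_length_indicator Suc_le_eq)
  qed
  then show ?thesis by (auto simp: admissible_def)
qed

lemma closed_admissible: "closed (admissible E \<Gamma>)"
proof -
  have cont: "continuous_on UNIV (\<lambda>r. rho_length r \<gamma>)" for \<gamma>
    by (induct \<gamma>) (auto simp: rho_length_def intro!: continuous_intros)
  have "admissible E \<Gamma> = (\<Inter>e\<in>-E. {r. r e = 0}) \<inter> (\<Inter>e\<in>E. {r. 0 \<le> r e}) \<inter>
      (\<Inter>\<gamma>\<in>\<Gamma>. {r. 1 \<le> rho_length r \<gamma>})"
    by (auto simp: admissible_def)
  also have "closed \<dots>"
    by (intro closed_Int closed_INT ballI closed_Collect_eq closed_Collect_le cont
        continuous_on_product_coordinates continuous_on_const)
  finally show ?thesis .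
qed

lemma Mod_le_energy:
  assumes "\<forall>e\<in>E. 0 \<le> \<sigma> e" "r \<in> admissible E \<Gamma>"
  shows "Mod E p \<Gamma> \<sigma> \<le> energy E p \<sigma> r"
proof -
  have "0 \<le> energy E p \<sigma> \<rho>" for \<rho>
    unfolding energy_def using assms(1) by (intro sum_nonneg) auto
  then show ?thesis
    unfolding Mod_def using assms(2) by (intro cInf_lower) (auto simp: bdd_below_def)
qed

lemma sum_weighted_difference_le:
  fixes \<tau> \<sigma> a b :: "'a \<Rightarrow> real"
  assumes "\<forall>e\<in>E. \<bar>\<tau> e - \<sigma> e\<bar> \<le> \<delta>" "\<forall>e\<in>E. 0 \<le> a e \<and> a e \<le> K \<and> 0 \<le> b e \<and> b e \<le> K"
  shows "(\<Sum>e\<in>E. (\<tau> e - \<sigma> e) * (a e - b e)) \<le> real (card E) * (\<delta> * K)"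
proof -
  have "(\<tau> e - \<sigma> e) * (a e - b e) \<le> \<delta> * K" if "e \<in> E" for e
  proof -
    have "(\<tau> e - \<sigma> e) * (a e - b e) \<le> \<bar>\<tau> e - \<sigma> e\<bar> * \<bar>a e - b e\<bar>"
      by (simp add: abs_mult[symmetric])
    also have "\<dots> \<le> \<delta> * K"
      using assms that by (intro mult_mono) auto
    finally show ?thesis .
  qed
  then have "(\<Sum>e\<in>E. (\<tau> e - \<sigma> e) * (a e - b e)) \<le> (\<Sum>e\<in>E. \<delta> * K)"
    by (rule sum_mono)
  then show ?thesis by simp
qed

locale walk_modulus =
  fixes E :: "('v \<times> 'v) set" and \<Gamma> :: "('v \<times> 'v) list set" and p :: real
  assumes finite_E: "finite E" and walks: "\<forall>\<gamma>\<in>\<Gamma>. is_walk E \<gamma>" and p_gt_1: "1 < p"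
begin

abbreviation modulus :: "('v \<times> 'v \<Rightarrow> real) \<Rightarrow> real" where
  "modulus \<equiv> Mod E p \<Gamma>"

abbreviation extremal :: "('v \<times> 'v \<Rightarrow> real) \<Rightarrow> 'v \<times> 'v \<Rightarrow> real" where
  "extremal \<equiv> extremal_density E p \<Gamma>"

lemma Mod_le_sum_weights:
  assumes "\<forall>e\<in>E. 0 \<le> \<sigma> e"
  shows "modulus \<sigma> \<le> (\<Sum>e\<in>E. \<sigma> e)"
proof -
  have "modulus \<sigma> \<le> energy E p \<sigma> (\<lambda>e. if e \<in> E then 1 else 0)"
    using Mod_le_energy[OF assms indicator_admissible[OF walks]] .
  also have "\<dots> = (\<Sum>e\<in>E. \<sigma> e)"
    unfolding energy_def by (intro sum.cong) auto
  finally show ?thesis .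
qed

lemma admissible_le_if_energy_le:
  assumes c: "0 < c" "\<forall>e\<in>E. c \<le> \<sigma> e"
    and r: "r \<in> admissible E \<Gamma>" "energy E p \<sigma> r \<le> B"
  shows "r e \<le> max 1 (B / c)"
proof (cases "e \<in> E")
  case True
  have "c * r e powr p \<le> \<sigma> e * r e powr p"
    using c True by (intro mult_right_mono) auto
  also have "\<dots> \<le> (\<Sum>e\<in>E. \<sigma> e * r e powr p)"
    using c True by (intro member_le_sum finite_E) (auto intro: order_trans[OF less_imp_le])
  also have "\<dots> \<le> B"
    using r energy_admissible by metis
  finally have "r e powr p \<le> B / c"
    using c by (simp add: field_simps)
  then show ?thesis
    using le_max_one_if_powr_le[of "r e" p] admissible_nonneg[OF r(1)] p_gt_1 by simp
next
  case False
  then show ?thesis using admissible_zero[OF r(1)] by simp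
qed

lemma exists_energy_minimizer:
  assumes pos: "\<forall>e\<in>E. 0 < \<sigma> e"
  obtains \<rho> where "\<rho> \<in> admissible E \<Gamma>" "\<And>r. r \<in> admissible E \<Gamma> \<Longrightarrow> energy E p \<sigma> \<rho> \<le> energy E p \<sigma> r"
proof -
  define one where "one = (\<lambda>e. if e \<in> E then 1 else (0::real))"
  have one: "one \<in> admissible E \<Gamma>"
    unfolding one_def by (rule indicator_admissible[OF walks])
  define c where "c = Min (insert 1 (\<sigma> ` E))"
  have c: "0 < c" "\<forall>e\<in>E. c \<le> \<sigma> e"
    using pos finite_E unfolding c_def by (auto simp: Min_gr_iff)
  define B where "B = energy E p \<sigma> one"
  define M where "M = max 1 (B / c)"
  text \<open>Densities of energy at most \<open>B\<close> are bounded by \<open>M\<close>, so minimizing over the compact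
    set \<open>K\<close> suffices.\<close>
  define K where "K = PiE UNIV (\<lambda>e. if e \<in> E then {0..M} else {0}) \<inter> admissible E \<Gamma>"
  have "compactin (product_topology (\<lambda>_. euclidean) UNIV)
      (PiE UNIV (\<lambda>e. if e \<in> E then {0..M} else {0::real}))"
    by (subst compactin_PiE) auto
  then have "compact (PiE UNIV (\<lambda>e. if e \<in> E then {0..M} else {0::real}))"
    by (simp add: euclidean_product_topology)
  then have "compact K"
    unfolding K_def using closed_admissible by blast
  moreover have "continuous_on K (energy E p \<sigma>)"
    unfolding energy_def using p_gt_1
    by (intro continuous_intros continuous_on_powr' continuous_on_subset
        [OF continuous_on_product_coordinates subset_UNIV]) auto
  moreover have K_iff: "r \<in> K \<longleftrightarrow> r \<in> admissible E \<Gamma> \<and> (\<forall>e\<in>E. r e \<le> M)" for r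
    by (auto simp: K_def PiE_iff intro: admissible_nonneg dest: admissible_zero)
  moreover have "one \<in> K"
    using one by (simp add: K_iff one_def M_def)
  ultimately obtain \<rho> where \<rho>: "\<rho> \<in> K" "\<And>r. r \<in> K \<Longrightarrow> energy E p \<sigma> \<rho> \<le> energy E p \<sigma> r"
    using continuous_attains_inf[of K "energy E p \<sigma>"] by blast
  have "energy E p \<sigma> \<rho> \<le> energy E p \<sigma> r" if r: "r \<in> admissible E \<Gamma>" for r
  proof (cases "energy E p \<sigma> r \<le> B")
    case True
    then show ?thesis
      using \<rho>(2) r admissible_le_if_energy_le[OF c r] by (simp add: K_iff M_def)
  next
    case False
    then show ?thesis using \<rho>(2)[OF \<open>one \<in> K\<close>] by (simp add: B_def)
  qed
  then show thesis using that \<rho>(1) K_iff by blast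
qed

lemma energy_minimizer_unique:
  assumes pos: "\<forall>e\<in>E. 0 < \<sigma> e"
    and \<rho>: "\<rho> \<in> admissible E \<Gamma>" "\<And>s. s \<in> admissible E \<Gamma> \<Longrightarrow> energy E p \<sigma> \<rho> \<le> energy E p \<sigma> s"
    and r: "r \<in> admissible E \<Gamma>" "energy E p \<sigma> r = energy E p \<sigma> \<rho>"
  shows "r = \<rho>"
proof (rule ccontr)
  assume "r \<noteq> \<rho>"
  then obtain e where ne: "\<rho> e \<noteq> r e" by (metis ext)
  then have e: "e \<in> E" by (metis admissible_zero \<rho>(1) r(1))
  text \<open>Strict convexity: the midpoint would have strictly smaller energy.\<close>
  have "0 < (\<Sum>e\<in>E. \<sigma> e * midpoint_defect p (\<rho> e) (r e))"
  proof (rule sum_pos2[OF finite_E e])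
    show "0 < \<sigma> e * midpoint_defect p (\<rho> e) (r e)"
      using pos e ne midpoint_defect_pos[OF p_gt_1 admissible_nonneg[OF \<rho>(1)] admissible_nonneg[OF r(1)]]
      by simp
    show "0 \<le> \<sigma> i * midpoint_defect p (\<rho> i) (r i)" if "i \<in> E" for i
      using pos that midpoint_defect_nonneg[OF p_gt_1 admissible_nonneg[OF \<rho>(1)] admissible_nonneg[OF r(1)]]
      by (simp add: less_imp_le)
  qed
  moreover have "energy E p \<sigma> \<rho> \<le> energy E p \<sigma> (\<lambda>e. (\<rho> e + r e) / 2)"
    using \<rho>(2) admissible_midpoint[OF \<rho>(1) r(1)] by blast
  ultimately show False
    using energy_midpoint_defect[OF \<rho>(1) r(1), of p \<sigma>] r(2) by linarith
qed

lemma extremal_density: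
  assumes pos: "\<forall>e\<in>E. 0 < \<sigma> e"
  shows "extremal \<sigma> \<in> admissible E \<Gamma>" "energy E p \<sigma> (extremal \<sigma>) = modulus \<sigma>"
proof -
  obtain \<rho> where \<rho>: "\<rho> \<in> admissible E \<Gamma>"
      "\<And>r. r \<in> admissible E \<Gamma> \<Longrightarrow> energy E p \<sigma> \<rho> \<le> energy E p \<sigma> r"
    using exists_energy_minimizer[OF pos] by blast
  have Mod: "modulus \<sigma> = energy E p \<sigma> \<rho>"
    unfolding Mod_def by (rule cInf_eq_minimum) (use \<rho> in auto)
  have "extremal \<sigma> = \<rho>"
    unfolding extremal_density_def
    by (rule the_equality) (use \<rho> Mod energy_minimizer_unique[OF pos \<rho>] in auto)
  then show "extremal \<sigma> \<in> admissible E \<Gamma>" "energy E p \<sigma> (extremal \<sigma>) = modulus \<sigma>"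
    using \<rho>(1) Mod by simp_all
qed

lemma extremal_density_bounded:
  assumes pos: "\<forall>e\<in>E. 0 < \<sigma> e" and c: "0 < c" "\<forall>e\<in>E. c \<le> \<sigma> e"
  shows "0 \<le> extremal \<sigma> e" "extremal \<sigma> e \<le> max 1 ((\<Sum>e\<in>E. \<sigma> e) / c)"
proof -
  have "energy E p \<sigma> (extremal \<sigma>) \<le> (\<Sum>e\<in>E. \<sigma> e)"
    using extremal_density(2)[OF pos] Mod_le_sum_weights pos by (simp add: less_imp_le)
  then show "extremal \<sigma> e \<le> max 1 ((\<Sum>e\<in>E. \<sigma> e) / c)"
    using admissible_le_if_energy_le[OF c extremal_density(1)[OF pos]] by blast
  show "0 \<le> extremal \<sigma> e"
    using admissible_nonneg[OF extremal_density(1)[OF pos]] .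
qed

lemma extremal_density_bounded_near:
  assumes c: "0 < c" "\<forall>e\<in>E. 2 * c \<le> \<sigma> e" and near: "\<forall>e\<in>E. \<bar>\<tau> e - \<sigma> e\<bar> \<le> c"
  shows "0 \<le> extremal \<tau> e \<and> extremal \<tau> e \<le> max 1 (((\<Sum>e\<in>E. \<sigma> e) + real (card E) * c) / c)"
proof -
  have \<tau>c: "\<forall>e\<in>E. c \<le> \<tau> e" using c near by force
  then have pos: "\<forall>e\<in>E. 0 < \<tau> e" using c by force
  have "(\<Sum>e\<in>E. \<tau> e) \<le> (\<Sum>e\<in>E. \<sigma> e + c)"
    using near by (intro sum_mono) force
  then have "(\<Sum>e\<in>E. \<tau> e) / c \<le> ((\<Sum>e\<in>E. \<sigma> e) + real (card E) * c) / c"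
    using c by (intro divide_right_mono) (auto simp: sum.distrib)
  then show ?thesis
    using extremal_density_bounded[OF pos c(1) \<tau>c, of e] by linarith
qed

lemma Mod_diff_le:
  assumes "\<forall>e\<in>E. 0 < \<sigma> e" "\<forall>e\<in>E. 0 < \<tau> e"
  shows "modulus \<tau> - modulus \<sigma> \<le> (\<Sum>e\<in>E. (\<tau> e - \<sigma> e) * extremal \<sigma> e powr p)"
proof -
  have "modulus \<tau> \<le> energy E p \<tau> (extremal \<sigma>)"
    using assms by (intro Mod_le_energy extremal_density) (auto simp: less_imp_le)
  then show ?thesis
    using extremal_density[OF assms(1)]
    by (simp add: energy_admissible sum_subtractf left_diff_distrib)
qed

lemma Mod_diff_ge:
  assumes "\<forall>e\<in>E. 0 < \<sigma> e" "\<forall>e\<in>E. 0 < \<tau> e"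
  shows "(\<Sum>e\<in>E. (\<tau> e - \<sigma> e) * extremal \<tau> e powr p) \<le> modulus \<tau> - modulus \<sigma>"
proof -
  have "modulus \<sigma> \<le> energy E p \<sigma> (extremal \<tau>)"
    using assms by (intro Mod_le_energy extremal_density) (auto simp: less_imp_le)
  then show ?thesis
    using extremal_density[OF assms(2)]
    by (simp add: energy_admissible sum_subtractf left_diff_distrib)
qed

lemma energy_extremal_density_perturbed:
  assumes "\<forall>e\<in>E. 0 < \<sigma> e" "\<forall>e\<in>E. 0 < \<tau> e"
  shows "energy E p \<sigma> (extremal \<tau>) \<le>
    modulus \<sigma> + (\<Sum>e\<in>E. (\<tau> e - \<sigma> e) * (extremal \<sigma> e powr p - extremal \<tau> e powr p))"
proof -
  have "energy E p \<sigma> (extremal \<tau>)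
      = modulus \<tau> - (\<Sum>e\<in>E. (\<tau> e - \<sigma> e) * extremal \<tau> e powr p)"
    using extremal_density[OF assms(2)]
    by (simp add: energy_admissible sum_subtractf left_diff_distrib)
  then show ?thesis
    using Mod_diff_le[OF assms] by (simp add: right_diff_distrib sum_subtractf)
qed

lemma midpoint_defect_extremal_le:
  assumes pos: "\<forall>e\<in>E. 0 < \<sigma> e" and r: "r \<in> admissible E \<Gamma>"
  shows "(\<Sum>e\<in>E. \<sigma> e * midpoint_defect p (extremal \<sigma> e) (r e)) \<le> energy E p \<sigma> r - modulus \<sigma>"
proof -
  have "modulus \<sigma> \<le> energy E p \<sigma> (\<lambda>e. (extremal \<sigma> e + r e) / 2)"
    using pos by (intro Mod_le_energy admissible_midpoint extremal_density r) (auto simp: less_imp_le)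
  then show ?thesis
    using energy_midpoint_defect[OF extremal_density(1)[OF pos] r, of p \<sigma>] extremal_density(2)[OF pos]
    by linarith
qed

lemma midpoint_defect_extremal_perturbed_le:
  assumes pos: "\<forall>e\<in>E. 0 < \<sigma> e" "\<forall>e\<in>E. 0 < \<tau> e" and near: "\<forall>e\<in>E. \<bar>\<tau> e - \<sigma> e\<bar> \<le> \<delta>"
    and K: "\<And>e. extremal \<sigma> e \<le> K" "\<And>e. extremal \<tau> e \<le> K" and e0: "e0 \<in> E"
  shows "\<sigma> e0 * midpoint_defect p (extremal \<sigma> e0) (extremal \<tau> e0) \<le> real (card E) * (\<delta> * K powr p)"
proof -
  have nonneg: "0 \<le> extremal \<sigma> e" "0 \<le> extremal \<tau> e" for e
    using admissible_nonneg extremal_density(1) pos by blast+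
  have "\<sigma> e0 * midpoint_defect p (extremal \<sigma> e0) (extremal \<tau> e0)
      \<le> (\<Sum>e\<in>E. \<sigma> e * midpoint_defect p (extremal \<sigma> e) (extremal \<tau> e))"
    using pos(1) midpoint_defect_nonneg[OF p_gt_1 nonneg]
    by (intro member_le_sum finite_E e0 mult_nonneg_nonneg) (auto simp: less_imp_le)
  also have "\<dots> \<le> energy E p \<sigma> (extremal \<tau>) - modulus \<sigma>"
    using midpoint_defect_extremal_le[OF pos(1) extremal_density(1)[OF pos(2)]] .
  also have "\<dots> \<le> (\<Sum>e\<in>E. (\<tau> e - \<sigma> e) * (extremal \<sigma> e powr p - extremal \<tau> e powr p))"
    using energy_extremal_density_perturbed[OF pos] by simp
  also have "\<dots> \<le> real (card E) * (\<delta> * K powr p)"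
    using nonneg K p_gt_1 by (intro sum_weighted_difference_le near) (auto intro: powr_mono2)
  finally show ?thesis .
qed

lemma extremal_density_close:
  assumes pos: "\<forall>e\<in>E. 0 < \<sigma> e" "\<forall>e\<in>E. 0 < \<tau> e" and near: "\<forall>e\<in>E. \<bar>\<tau> e - \<sigma> e\<bar> \<le> \<delta>"
    and M: "\<And>e. extremal \<sigma> e \<le> M" "\<And>e. extremal \<tau> e \<le> M" and e0: "e0 \<in> E"
    and \<kappa>: "\<And>a b. \<lbrakk>0 \<le> a; a \<le> M; 0 \<le> b; b \<le> M; \<epsilon> \<le> \<bar>a - b\<bar>\<rbrakk> \<Longrightarrow> \<kappa> \<le> midpoint_defect p a b"
    and small: "real (card E) * (\<delta> * M powr p) < \<sigma> e0 * \<kappa>"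
  shows "\<bar>extremal \<tau> e0 - extremal \<sigma> e0\<bar> < \<epsilon>"
proof (rule ccontr)
  assume "\<not> ?thesis"
  moreover have "0 \<le> extremal \<sigma> e0" "0 \<le> extremal \<tau> e0"
    using admissible_nonneg extremal_density(1) pos by blast+
  ultimately have "\<kappa> \<le> midpoint_defect p (extremal \<sigma> e0) (extremal \<tau> e0)"
    using M by (intro \<kappa>) (auto simp: abs_minus_commute)
  then have "\<sigma> e0 * \<kappa> \<le> \<sigma> e0 * midpoint_defect p (extremal \<sigma> e0) (extremal \<tau> e0)"
    using pos(1) e0 by (simp add: less_imp_le)
  also have "\<dots> \<le> real (card E) * (\<delta> * M powr p)"
    by (rule midpoint_defect_extremal_perturbed_le[OF pos near M e0])
  finally show False using small by simp
qed

lemma tendsto_extremal_density: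
  assumes pos: "\<forall>e\<in>E. 0 < \<sigma> e" and g: "\<forall>e\<in>E. ((\<lambda>x. g x e) \<longlongrightarrow> \<sigma> e) F" and e0: "e0 \<in> E"
  shows "((\<lambda>x. extremal (g x) e0) \<longlongrightarrow> extremal \<sigma> e0) F"
proof (rule tendstoI)
  fix \<epsilon> :: real
  assume "0 < \<epsilon>"
  define c where "c = Min (insert 1 (\<sigma> ` E)) / 2"
  have c: "0 < c" "\<forall>e\<in>E. 2 * c \<le> \<sigma> e"
    using pos finite_E unfolding c_def by (auto simp: Min_gr_iff)
  define M where "M = max 1 (((\<Sum>e\<in>E. \<sigma> e) + real (card E) * c) / c)"
  have bounded: "0 \<le> extremal \<tau> e \<and> extremal \<tau> e \<le> M" if "\<forall>e\<in>E. \<bar>\<tau> e - \<sigma> e\<bar> \<le> c" for \<tau> e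
    unfolding M_def by (rule extremal_density_bounded_near[OF c that])
  obtain \<kappa> where \<kappa>: "0 < \<kappa>"
    "\<And>a b. \<lbrakk>0 \<le> a; a \<le> M; 0 \<le> b; b \<le> M; \<epsilon> \<le> \<bar>a - b\<bar>\<rbrakk> \<Longrightarrow> \<kappa> \<le> midpoint_defect p a b"
    using midpoint_defect_uniformly_pos[OF p_gt_1 \<open>0 < \<epsilon>\<close>] by blast
  define \<delta> where "\<delta> = min c (c * \<kappa> / (real (card E) * M powr p + 1))"
  have den: "0 < real (card E) * M powr p + 1"
    by (simp add: add_nonneg_pos)
  have \<delta>: "0 < \<delta>" "\<delta> \<le> c"
    using c \<kappa> den by (auto simp: \<delta>_def)
  have "real (card E) * (\<delta> * M powr p) < \<delta> * (real (card E) * M powr p + 1)"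
    using \<delta> by (simp add: algebra_simps)
  also have "\<dots> \<le> c * \<kappa>"
  proof -
    have "\<delta> \<le> c * \<kappa> / (real (card E) * M powr p + 1)" by (simp add: \<delta>_def)
    then show ?thesis using den by (simp add: pos_le_divide_eq mult.commute)
  qed
  finally have small: "real (card E) * (\<delta> * M powr p) < c * \<kappa>" .
  have \<rho>M: "0 \<le> extremal \<sigma> e \<and> extremal \<sigma> e \<le> M" for e
    using bounded[of \<sigma>] c by simp
  have "eventually (\<lambda>x. \<forall>e\<in>E. \<bar>g x e - \<sigma> e\<bar> < \<delta>) F"
  proof (rule eventually_ball_finite[OF finite_E], intro ballI)
    fix e assume "e \<in> E"
    with tendstoD[OF g[rule_format] \<open>0 < \<delta>\<close>] show "eventually (\<lambda>x. \<bar>g x e - \<sigma> e\<bar> < \<delta>) F"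
      by (simp add: dist_real_def)
  qed
  then show "eventually (\<lambda>x. dist (extremal (g x) e0) (extremal \<sigma> e0) < \<epsilon>) F"
  proof eventually_elim
    case (elim x)
    have near: "\<forall>e\<in>E. \<bar>g x e - \<sigma> e\<bar> \<le> \<delta>" using elim by force
    then have near_c: "\<forall>e\<in>E. \<bar>g x e - \<sigma> e\<bar> \<le> c" using \<delta> by force
    then have pos_g: "\<forall>e\<in>E. 0 < g x e" using c by force
    have M: "extremal \<sigma> e \<le> M" "extremal (g x) e \<le> M" for e
      using \<rho>M bounded[OF near_c] by auto
    have "c * \<kappa> \<le> \<sigma> e0 * \<kappa>" using c e0 \<kappa> by (intro mult_right_mono) auto
    then have "real (card E) * (\<delta> * M powr p) < \<sigma> e0 * \<kappa>" using small by linarith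
    then show ?case
      using extremal_density_close[OF pos pos_g near M e0 \<kappa>(2)] by (simp add: dist_real_def)
  qed
qed

lemma Mod_difference_quotient_error:
  assumes pos: "\<forall>e\<in>E. 0 < \<sigma> e" "\<forall>e\<in>E. 0 < \<tau> e"
    and h: "h \<noteq> 0" and \<tau>: "\<forall>e\<in>E. \<tau> e = \<sigma> e + h * \<eta> e"
  shows "\<bar>(modulus \<tau> - modulus \<sigma>) / h - (\<Sum>e\<in>E. \<eta> e * extremal \<sigma> e powr p)\<bar>
    \<le> (\<Sum>e\<in>E. \<bar>\<eta> e\<bar> * \<bar>extremal \<tau> e powr p - extremal \<sigma> e powr p\<bar>)"
proof -
  define L where "L \<sigma>' = (\<Sum>e\<in>E. \<eta> e * extremal \<sigma>' e powr p)" for \<sigma>'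
  have "(\<Sum>e\<in>E. (\<tau> e - \<sigma> e) * extremal \<sigma>' e powr p) = h * L \<sigma>'" for \<sigma>'
    unfolding L_def sum_distrib_left using \<tau> by (intro sum.cong) auto
  then have D: "modulus \<tau> - modulus \<sigma> \<le> h * L \<sigma>" "h * L \<tau> \<le> modulus \<tau> - modulus \<sigma>"
    using Mod_diff_le[OF pos] Mod_diff_ge[OF pos] by auto
  have "\<bar>(modulus \<tau> - modulus \<sigma>) / h - L \<sigma>\<bar> \<le> \<bar>L \<tau> - L \<sigma>\<bar>"
  proof (cases "0 < h")
    case True
    then have "(modulus \<tau> - modulus \<sigma>) / h \<le> L \<sigma>" "L \<tau> \<le> (modulus \<tau> - modulus \<sigma>) / h"
      using D by (auto simp: field_simps)
    then show ?thesis by linarith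
  next
    case False
    then have "h < 0" using h by simp
    then have "L \<sigma> \<le> (modulus \<tau> - modulus \<sigma>) / h" "(modulus \<tau> - modulus \<sigma>) / h \<le> L \<tau>"
      using D by (auto simp: field_simps)
    then show ?thesis by linarith
  qed
  also have "\<dots> = \<bar>\<Sum>e\<in>E. \<eta> e * (extremal \<tau> e powr p - extremal \<sigma> e powr p)\<bar>"
    unfolding L_def by (simp add: sum_subtractf right_diff_distrib)
  also have "\<dots> \<le> (\<Sum>e\<in>E. \<bar>\<eta> e\<bar> * \<bar>extremal \<tau> e powr p - extremal \<sigma> e powr p\<bar>)"
    by (rule order_trans[OF sum_abs]) (simp add: abs_mult)
  finally show ?thesis unfolding L_def .
qed

lemma tendsto_Mod_difference_quotient:
  assumes pos: "\<forall>e\<in>E. 0 < \<sigma> e" and g: "\<forall>e\<in>E. ((\<lambda>x. g x e) \<longlongrightarrow> \<sigma> e) F"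
    and g_eq: "eventually (\<lambda>x. h x \<noteq> 0 \<and> (\<forall>e\<in>E. g x e = \<sigma> e + h x * \<eta> e)) F"
  shows "((\<lambda>x. (modulus (g x) - modulus \<sigma>) / h x) \<longlongrightarrow> (\<Sum>e\<in>E. \<eta> e * extremal \<sigma> e powr p)) F"
proof -
  define err where
    "err x = (\<Sum>e\<in>E. \<bar>\<eta> e\<bar> * \<bar>extremal (g x) e powr p - extremal \<sigma> e powr p\<bar>)" for x
  have pos_g: "eventually (\<lambda>x. \<forall>e\<in>E. 0 < g x e) F"
  proof (rule eventually_ball_finite[OF finite_E], intro ballI)
    fix e assume "e \<in> E"
    with order_tendstoD(1)[OF g[rule_format]] pos show "eventually (\<lambda>x. 0 < g x e) F"
      by blast
  qed
  have nonneg: "0 \<le> extremal \<sigma>' e" if "\<forall>e\<in>E. 0 < \<sigma>' e" for \<sigma>' e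
    using admissible_nonneg[OF extremal_density(1)[OF that]] .
  have powr_tendsto: "((\<lambda>x. extremal (g x) e powr p) \<longlongrightarrow> extremal \<sigma> e powr p) F"
    if "e \<in> E" for e
    using tendsto_extremal_density[OF pos g that] p_gt_1 pos_g
    by (intro tendsto_powr') (auto elim!: eventually_mono intro: nonneg)
  then have "(err \<longlongrightarrow> (\<Sum>e\<in>E. \<bar>\<eta> e\<bar> * \<bar>extremal \<sigma> e powr p - extremal \<sigma> e powr p\<bar>)) F"
    unfolding err_def
    by (intro tendsto_sum tendsto_mult tendsto_rabs tendsto_diff tendsto_const powr_tendsto)
  then have "(err \<longlongrightarrow> 0) F" by simp
  moreover have "eventually (\<lambda>x. norm ((modulus (g x) - modulus \<sigma>) / h x
      - (\<Sum>e\<in>E. \<eta> e * extremal \<sigma> e powr p)) \<le> err x) F"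
    using g_eq pos_g
    by eventually_elim (use Mod_difference_quotient_error[OF pos] in \<open>auto simp: err_def\<close>)
  ultimately show ?thesis
    by (rule Lim_null_comparison[THEN LIM_zero_cancel, rotated])
qed

lemma Mod_directional_derivative_right:
  assumes "\<forall>e\<in>E. 0 < \<sigma> e"
  shows "((\<lambda>h. (modulus (\<lambda>e. \<sigma> e + h * \<eta> e) - modulus \<sigma>) / h)
    \<longlongrightarrow> (\<Sum>e\<in>E. \<eta> e * extremal \<sigma> e powr p)) (at_right 0)"
  using assms eventually_at_right_less[of "0::real"]
  by (intro tendsto_Mod_difference_quotient) (auto intro!: tendsto_eq_intros elim!: eventually_mono)

lemma Mod_partial_derivative:
  assumes "\<forall>e\<in>E. 0 < \<sigma> e" and e: "e \<in> E"
  shows "((\<lambda>t. modulus (\<sigma>(e := \<sigma> e + t))) has_real_derivative extremal \<sigma> e powr p) (at 0)"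
proof -
  define \<eta> :: "'v \<times> 'v \<Rightarrow> real" where "\<eta> e' = (if e' = e then 1 else 0)" for e'
  have "(\<Sum>e'\<in>E. \<eta> e' * extremal \<sigma> e' powr p) = (\<Sum>e'\<in>E. if e' = e then extremal \<sigma> e' powr p else 0)"
    by (intro sum.cong) (auto simp: \<eta>_def)
  also have "\<dots> = extremal \<sigma> e powr p"
    using finite_E e by (simp add: sum.delta)
  finally have sum_\<eta>: "(\<Sum>e'\<in>E. \<eta> e' * extremal \<sigma> e' powr p) = extremal \<sigma> e powr p" .
  have "((\<lambda>t. (\<sigma>(e := \<sigma> e + t)) e') \<longlongrightarrow> \<sigma> e') (at 0)" for e'
    by (cases "e' = e") (auto intro!: tendsto_eq_intros)
  then have "((\<lambda>t. (modulus (\<sigma>(e := \<sigma> e + t)) - modulus \<sigma>) / t) \<longlongrightarrow> extremal \<sigma> e powr p) (at 0)"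
    using assms eventually_neq_at_within[of 0 0 UNIV] unfolding sum_\<eta>[symmetric]
    by (intro tendsto_Mod_difference_quotient) (auto simp: \<eta>_def elim!: eventually_mono)
  then show ?thesis
    by (simp add: has_field_derivative_iff)
qed

end

theorem mainTheorem14:
  fixes V :: "'v set" and E :: "('v \<times> 'v) set" and \<Gamma> :: "('v \<times> 'v) list set"
    and p :: real and \<sigma> \<eta> :: "'v \<times> 'v \<Rightarrow> real"
  assumes "simple_graph V E"
    and "\<Gamma> \<noteq> {}" and "\<forall>\<gamma>\<in>\<Gamma>. is_walk E \<gamma>"
    and "1 < p"
    and "\<forall>e\<in>E. 0 < \<sigma> e"
  shows "((\<lambda>h. (Mod E p \<Gamma> (\<lambda>e. \<sigma> e + h * \<eta> e) - Mod E p \<Gamma> \<sigma>) / h)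
            \<longlongrightarrow> (\<Sum>e\<in>E. \<eta> e * (extremal_density E p \<Gamma> \<sigma> e) powr p)) (at_right 0)
       \<and> (\<forall>e\<in>E. ((\<lambda>t. Mod E p \<Gamma> (\<sigma>(e := \<sigma> e + t)))
               has_real_derivative (extremal_density E p \<Gamma> \<sigma> e) powr p) (at 0))"
proof -
  have "finite E"
    using assms(1) finite_subset[OF _ finite_cartesian_product] unfolding simple_graph_def by blast
  then interpret walk_modulus E \<Gamma> p
    using assms(3,4) by unfold_locales
  show ?thesis
    using Mod_directional_derivative_right Mod_partial_derivative assms(5) by blast
qed

end
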